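(* Let $\Lambda,\delta>0$ and $0<s<1$. The function $\bar u$ (defined in the context) satisfies $$\int_{-\delta}^0(-\Delta)^s\bar u(x)\,dx=0.$$
   Context: $\bar u:\mathbb R\to\mathbb R$ is the $(\Lambda+1)\delta$-periodic function defined on $(-\delta,\Lambda\delta]$ by $\bar u(x)=-\Lambda x$ for $-\delta<x<0$ and $\bar u(x)=x$ for $0\le x\le\Lambda\delta$. For $0<s<1$, the fractional Laplacian, defined at every point where $\bar u'$ does not jump, is $$(-\Delta)^s \bar u(x):=2\lim_{r\to0^+}\int_{\mathbb R\setminus(x-r,x+r)}\frac{\bar u(x)-\bar u(y)}{|x-y|^{1+2s}}\,dy .$$ *)

theory Defs
  imports "HOL-Analysis.Analysis"
begin

text \<open>The ((Lambda+1)*delta)-periodic sawtooth function: on (-delta, Lambda*delta]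
  it equals -Lambda*x for x<0 and x for x>=0.  The reduction y of x into
  (-delta, Lambda*delta] is y = x - p*ceiling((x - Lambda*delta)/p), p the period.\<close>
definition ubar :: "real \<Rightarrow> real \<Rightarrow> real \<Rightarrow> real" where
  "ubar \<Lambda> \<delta> x =
     (let p = (\<Lambda> + 1) * \<delta>;
          y = x - p * of_int \<lceil>(x - \<Lambda> * \<delta>) / p\<rceil>
      in if y < 0 then - \<Lambda> * y else y)"

definition frac_lap_trunc :: "real \<Rightarrow> (real \<Rightarrow> real) \<Rightarrow> real \<Rightarrow> real \<Rightarrow> real" where
  "frac_lap_trunc s u x r =
     2 * integral (UNIV - {x - r <..< x + r}) (\<lambda>y. (u x - u y) / \<bar>x - y\<bar> powr (1 + 2 * s))"

definition frac_lap :: "real \<Rightarrow> (real \<Rightarrow> real) \<Rightarrow> real \<Rightarrow> real" where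
  "frac_lap s u x = Lim (at_right 0) (frac_lap_trunc s u x)"

end

theory Submission
  imports Defs
begin

text \<open>Near a point \<open>x\<close> of \<open>(-\<delta>, 0)\<close> the function \<open>ubar\<close> is affine, so the kernel
  \<open>(ubar x - ubar y) / |x - y|^(1+2s)\<close> is odd under \<open>y \<mapsto> 2x - y\<close> on small annuli around \<open>x\<close>:
  the truncated integrals are eventually constant and the principal value exists.
  The identity \<open>ubar (-\<delta> - y) = \<Lambda>\<delta> - ubar y\<close> makes the fractional Laplacian odd about
  \<open>-\<delta>/2\<close> on \<open>(-\<delta>, 0)\<close>, so its integral vanishes once it is integrable.  Integrability comes
  from the bound \<open>C\<^sub>1 |x|^(-s) + C\<^sub>2\<close> near the kink at \<open>0\<close> (Lipschitz estimate close to the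
  diagonal, boundedness far from it), which is integrable because \<open>s < 1\<close>.\<close>

section \<open>Integrals on the real line\<close>

lemma set_integrable_lborel_nonneg:
  fixes f :: "real \<Rightarrow> real"
  assumes "f integrable_on A" "\<And>x. x \<in> A \<Longrightarrow> 0 \<le> f x"
    and "A \<in> sets borel" "f \<in> borel_measurable borel"
  shows "set_integrable lborel A f"
proof -
  have "set_integrable lebesgue A f"
    using nonnegative_absolutely_integrable_1[OF assms(1,2)] by simp
  thus ?thesis unfolding set_integrable_def
    using assms(3,4) integrable_completion[of "\<lambda>x. indicator A x *\<^sub>R f x" lborel] by simp
qed

lemma set_integrable_even_extension:
  fixes f :: "real \<Rightarrow> 'a::{banach, second_countable_topology}"
  assumes f: "set_integrable lborel A f" and A: "A \<subseteq> {0..}" "A \<in> sets borel"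
  shows "set_integrable lborel {t. \<bar>t\<bar> \<in> A} (\<lambda>t. f \<bar>t\<bar>)"
proof -
  have "integrable lborel (\<lambda>t. indicator A (0 + (-1) * t) *\<^sub>R f (0 + (-1) * t))"
    using f unfolding set_integrable_def by (rule lborel_integrable_real_affine) simp
  hence "set_integrable lborel (uminus -` A) (\<lambda>t. f (- t))"
    by (simp add: set_integrable_def indicator_def)
  hence "set_integrable lborel (uminus -` A) (\<lambda>t. f \<bar>t\<bar>)"
    by (rule set_integrable_cong[THEN iffD1, rotated -1]) (use A in auto)
  moreover have "set_integrable lborel A (\<lambda>t. f \<bar>t\<bar>)"
    using f by (rule set_integrable_cong[THEN iffD1, rotated -1]) (use A in auto)
  ultimately have "set_integrable lborel (A \<union> uminus -` A) (\<lambda>t. f \<bar>t\<bar>)"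
    using A(2) by (intro set_integrable_Un) (auto simp: measurable_sets_borel[OF borel_measurable_uminus])
  moreover have "A \<union> uminus -` A = {t. \<bar>t\<bar> \<in> A}"
    using A(1) by (auto simp: abs_if)
  ultimately show ?thesis by simp
qed

lemma set_integrable_translate:
  fixes f :: "real \<Rightarrow> 'a::{banach, second_countable_topology}"
  assumes "set_integrable lborel A f"
  shows "set_integrable lborel {y. y - x \<in> A} (\<lambda>y. f (y - x))"
proof -
  have "integrable lborel (\<lambda>y. indicator A (- x + 1 * y) *\<^sub>R f (- x + 1 * y))"
    using assms unfolding set_integrable_def by (rule lborel_integrable_real_affine) simp
  thus ?thesis by (simp add: set_integrable_def indicator_def)
qed

lemma set_integrable_abs_powr_near:
  fixes b c x :: real
  assumes "b > -1" "c \<ge> 0"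
  shows "set_integrable lborel {y. \<bar>y - x\<bar> \<le> c} (\<lambda>y. \<bar>y - x\<bar> powr b)"
proof -
  have "set_integrable lborel {0..c} (\<lambda>t. t powr b)"
    by (rule set_integrable_lborel_nonneg) (use integrable_on_powr_from_0[OF assms] in auto)
  from set_integrable_translate[OF set_integrable_even_extension[OF this], of x]
  show ?thesis by simp
qed

lemma set_integrable_abs_powr_far:
  fixes e r x :: real
  assumes "e < -1" "r > 0"
  shows "set_integrable lborel {y. r \<le> \<bar>y - x\<bar>} (\<lambda>y. \<bar>y - x\<bar> powr e)"
proof -
  have "set_integrable lborel {r..} (\<lambda>t. t powr e)"
    by (rule set_integrable_lborel_nonneg) (use has_integral_powr_to_inf[OF assms] assms(2) in auto)
  from set_integrable_translate[OF set_integrable_even_extension[OF this], of x] assms(2)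
  show ?thesis by simp
qed

lemma lborel_integral_reflect:
  fixes f :: "real \<Rightarrow> 'a::{banach, second_countable_topology}"
  shows "(\<integral>y. f (c - y) \<partial>lborel) = (\<integral>y. f y \<partial>lborel)"
  using lborel_integral_real_affine[of "-1" f c] by simp

lemma lborel_integral_translate:
  fixes f :: "real \<Rightarrow> 'a::{banach, second_countable_topology}"
  shows "(\<integral>y. f (y - x) \<partial>lborel) = (\<integral>y. f y \<partial>lborel)"
  using lborel_integral_real_affine[of 1 f "-x"] by simp

lemma has_integral_0_if_odd_about_midpoint:
  fixes f :: "real \<Rightarrow> real"
  assumes f: "f integrable_on {(a + b) / 2..b}"
    and odd: "\<And>x. a < x \<Longrightarrow> x < b \<Longrightarrow> f (a + b - x) = - f x" and "a \<le> b"
  shows "(f has_integral 0) {a..b}"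
proof -
  define m where "m = (a + b) / 2"
  obtain I where I: "(f has_integral I) {m..b}" using f by (auto simp: m_def integrable_on_def)
  have "m - (a + b) = - m" "b - (a + b) = - a" by (simp_all add: m_def field_simps)
  hence "((\<lambda>x. f (x + (a + b))) has_integral I) {- m..- a}"
    using has_integral_shift_real_ivl[OF I, of "a + b"] by (simp only:)
  hence "((\<lambda>x. f (a + b - x)) has_integral I) {a..m}"
    using has_integral_reflect_real[of "\<lambda>x. f (a + b - x)" I m a, THEN iffD1] by (simp only: diff_minus_eq_add add.commute)
  hence "(f has_integral - I) {a..m}"
    using odd \<open>a \<le> b\<close>
    by (intro has_integral_spike_finite[where S = "{a, m}", OF _ _ has_integral_neg]) (auto simp: m_def)
  from has_integral_combine[OF _ _ this I] \<open>a \<le> b\<close> show ?thesis by (simp add: m_def)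
qed

section \<open>The truncated fractional Laplacian of a bounded function\<close>

definition frac_kernel :: "real \<Rightarrow> (real \<Rightarrow> real) \<Rightarrow> real \<Rightarrow> real \<Rightarrow> real" where
  "frac_kernel s u x y = (u x - u y) / \<bar>x - y\<bar> powr (1 + 2 * s)"

text \<open>The integral in \<open>frac_lap_trunc\<close> without the factor 2, taken as a Lebesgue integral so
  that dominated bounds are available.\<close>

definition frac_tail :: "real \<Rightarrow> (real \<Rightarrow> real) \<Rightarrow> real \<Rightarrow> real \<Rightarrow> real" where
  "frac_tail s u x r = (LINT y:{y. r \<le> \<bar>y - x\<bar>}|lborel. frac_kernel s u x y)"

lemma abs_frac_kernel:
  "\<bar>frac_kernel s u x y\<bar> = \<bar>u x - u y\<bar> * \<bar>y - x\<bar> powr (- (1 + 2 * s))"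
proof -
  have "\<bar>y - x\<bar> powr (- (1 + 2 * s)) = inverse (\<bar>x - y\<bar> powr (1 + 2 * s))"
    by (simp only: powr_minus abs_minus_commute)
  thus ?thesis by (simp add: frac_kernel_def divide_inverse abs_mult)
qed

lemma frac_kernel_measurable [measurable]:
  assumes [measurable]: "u \<in> borel_measurable borel"
  shows "frac_kernel s u x \<in> borel_measurable borel"
  unfolding frac_kernel_def by measurable

lemma frac_tail_integrable:
  assumes [measurable]: "u \<in> borel_measurable borel"
    and osc: "\<And>x y. \<bar>u x - u y\<bar> \<le> M" and "s > 0" "r > 0"
  shows "set_integrable lborel {y. r \<le> \<bar>y - x\<bar>} (frac_kernel s u x)"
proof (rule set_integrable_bound)
  show "set_integrable lborel {y. r \<le> \<bar>y - x\<bar>} (\<lambda>y. M * \<bar>y - x\<bar> powr (- (1 + 2 * s)))"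
    using set_integrable_abs_powr_far[of "- (1 + 2 * s)" r x] assms(3,4) by simp
  show "set_borel_measurable lborel {y. r \<le> \<bar>y - x\<bar>} (frac_kernel s u x)"
    unfolding set_borel_measurable_def by measurable
  have "\<bar>frac_kernel s u x y\<bar> \<le> \<bar>M * \<bar>y - x\<bar> powr (- (1 + 2 * s))\<bar>" for y
    unfolding abs_frac_kernel using osc[of x y] by (simp add: abs_mult mult_right_mono)
  thus "AE y in lborel. y \<in> {y. r \<le> \<bar>y - x\<bar>} \<longrightarrow>
      norm (frac_kernel s u x y) \<le> norm (M * \<bar>y - x\<bar> powr (- (1 + 2 * s)))"
    by simp
qed

lemma frac_tail_measurable [measurable]:
  assumes [measurable]: "u \<in> borel_measurable borel" "r \<in> borel_measurable borel"
  shows "(\<lambda>x. frac_tail s u x (r x)) \<in> borel_measurable borel"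
  unfolding frac_tail_def set_lebesgue_integral_def frac_kernel_def by measurable

lemma frac_lap_trunc_eq_frac_tail:
  assumes "u \<in> borel_measurable borel" "\<And>x y. \<bar>u x - u y\<bar> \<le> M" "s > 0" "r > 0"
  shows "frac_lap_trunc s u x r = 2 * frac_tail s u x r"
proof -
  have "UNIV - {x - r<..<x + r} = {y. r \<le> \<bar>y - x\<bar>}" by auto
  moreover have "(LINT y:{y. r \<le> \<bar>y - x\<bar>}|lborel. frac_kernel s u x y)
      = integral {y. r \<le> \<bar>y - x\<bar>} (frac_kernel s u x)"
    by (rule set_borel_integral_eq_integral(2)[OF frac_tail_integrable[OF assms]])
  ultimately show ?thesis
    by (simp add: frac_lap_trunc_def frac_tail_def frac_kernel_def[abs_def])
qed

lemma frac_tail_reflect: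
  assumes "\<And>y. u (c - y) = A - u y"
  shows "frac_tail s u (c - x) r = - frac_tail s u x r"
proof -
  have "frac_tail s u (c - x) r
      = (\<integral>y. indicator {y. r \<le> \<bar>y - (c - x)\<bar>} (c - y) * frac_kernel s u (c - x) (c - y) \<partial>lborel)"
    unfolding frac_tail_def set_lebesgue_integral_def
    by (simp add: lborel_integral_reflect[where f = "\<lambda>y. indicator _ y * frac_kernel s u (c - x) y"])
  also have "\<dots> = (\<integral>y. - (indicator {y. r \<le> \<bar>y - x\<bar>} y * frac_kernel s u x y) \<partial>lborel)"
  proof (rule Bochner_Integration.integral_cong)
    fix y
    have "\<bar>c - y - (c - x)\<bar> = \<bar>y - x\<bar>" "\<bar>c - x - (c - y)\<bar> = \<bar>x - y\<bar>" by simp_all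
    moreover have "u (c - x) - u (c - y) = - (u x - u y)" using assms by simp
    ultimately show "indicator {y. r \<le> \<bar>y - (c - x)\<bar>} (c - y) * frac_kernel s u (c - x) (c - y)
        = - (indicator {y. r \<le> \<bar>y - x\<bar>} y * frac_kernel s u x y)"
      unfolding frac_kernel_def indicator_def by (simp add: minus_divide_left[of "u x - u y"])
  qed simp
  finally show ?thesis by (simp add: frac_tail_def set_lebesgue_integral_def)
qed

lemma frac_tail_eq_if_affine_near:
  assumes u: "u \<in> borel_measurable borel" "\<And>x y. \<bar>u x - u y\<bar> \<le> M" "s > 0"
    and affine: "\<And>y. \<bar>y - x\<bar> < \<rho> \<Longrightarrow> u y = a * y + b"
    and r: "0 < r" "r \<le> \<rho>"
  shows "frac_tail s u x r = frac_tail s u x \<rho>"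
proof -
  define A where "A = {y. r \<le> \<bar>y - x\<bar> \<and> \<bar>y - x\<bar> < \<rho>}"
  have A_borel [measurable]: "A \<in> sets borel" unfolding A_def by measurable
  define g where "g = (\<lambda>y. indicator A y * frac_kernel s u x y)"
  have "g (2 * x - y) = - g y" for y
  proof (cases "y \<in> A")
    case True
    have "u x = a * x + b" "u y = a * y + b" "u (2 * x - y) = a * (2 * x - y) + b"
      using True affine r by (auto simp: A_def abs_minus_commute)
    hence "u x - u (2 * x - y) = - (u x - u y)" by (simp add: algebra_simps)
    moreover have "2 * x - y \<in> A" "\<bar>x - (2 * x - y)\<bar> = \<bar>x - y\<bar>"
      using True by (auto simp: A_def)
    ultimately show ?thesis using True
      by (simp add: g_def frac_kernel_def minus_divide_left[of "u x - u y"])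
  next
    case False
    hence "2 * x - y \<notin> A" by (auto simp: A_def)
    with False show ?thesis by (simp add: g_def)
  qed
  hence "(\<integral>y. g y \<partial>lborel) = - (\<integral>y. g y \<partial>lborel)"
    using lborel_integral_reflect[of g "2 * x"] by simp
  hence A_zero: "(LINT y:A|lborel. frac_kernel s u x y) = 0"
    by (simp add: set_lebesgue_integral_def g_def)
  have tail_r: "set_integrable lborel {y. r \<le> \<bar>y - x\<bar>} (frac_kernel s u x)"
    using frac_tail_integrable[OF u r(1)] .
  have split: "{y. r \<le> \<bar>y - x\<bar>} = A \<union> {y. \<rho> \<le> \<bar>y - x\<bar>}" using r by (auto simp: A_def)
  have "frac_tail s u x r
      = (LINT y:A|lborel. frac_kernel s u x y) + (LINT y:{y. \<rho> \<le> \<bar>y - x\<bar>}|lborel. frac_kernel s u x y)"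
    unfolding frac_tail_def split
    by (intro set_integral_Un set_integrable_subset[OF tail_r]) (use r in \<open>auto simp: A_def\<close>)
  with A_zero show ?thesis by (simp add: frac_tail_def)
qed

lemma tendsto_frac_lap_trunc_if_affine_near:
  assumes "u \<in> borel_measurable borel" "\<And>x y. \<bar>u x - u y\<bar> \<le> M" "s > 0"
    and "\<And>y. \<bar>y - x\<bar> < \<rho> \<Longrightarrow> u y = a * y + b" and "\<rho> > 0"
  shows "(frac_lap_trunc s u x \<longlongrightarrow> 2 * frac_tail s u x \<rho>) (at_right 0)"
proof (rule tendsto_eventually)
  have "frac_lap_trunc s u x r = 2 * frac_tail s u x \<rho>" if "0 < r" "r < \<rho>" for r
    using frac_lap_trunc_eq_frac_tail[OF assms(1-3) \<open>0 < r\<close>]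
      frac_tail_eq_if_affine_near[OF assms(1-4) \<open>0 < r\<close>] that by simp
  with \<open>\<rho> > 0\<close> show "\<forall>\<^sub>F r in at_right 0. frac_lap_trunc s u x r = 2 * frac_tail s u x \<rho>"
    unfolding eventually_at_right_field by blast
qed

lemma frac_lap_eq_if_affine_near:
  assumes "u \<in> borel_measurable borel" "\<And>x y. \<bar>u x - u y\<bar> \<le> M" "s > 0"
    and "\<And>y. \<bar>y - x\<bar> < \<rho> \<Longrightarrow> u y = a * y + b" and "\<rho> > 0"
  shows "frac_lap s u x = 2 * frac_tail s u x \<rho>"
  unfolding frac_lap_def by (rule tendsto_Lim[OF _ tendsto_frac_lap_trunc_if_affine_near[OF assms]]) simp

text \<open>Splitting the singularity \<open>|y - x|^(-2s)\<close> as \<open>r^(-s) |y - x|^(-s)\<close> keeps it integrable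
  in \<open>y\<close> and produces a factor \<open>r^(-s)\<close> that is integrable in \<open>x\<close> when \<open>r = |x|\<close>.\<close>

lemma abs_frac_kernel_le_near:
  assumes "\<bar>u x - u y\<bar> \<le> K * \<bar>y - x\<bar>" "0 \<le> K" "0 < r" "r \<le> \<bar>y - x\<bar>" "0 \<le> s"
  shows "\<bar>frac_kernel s u x y\<bar> \<le> K * r powr (- s) * \<bar>y - x\<bar> powr (- s)"
proof -
  have "\<bar>frac_kernel s u x y\<bar> \<le> K * \<bar>y - x\<bar> * \<bar>y - x\<bar> powr (- (1 + 2 * s))"
    using assms(1) by (simp add: abs_frac_kernel mult_right_mono)
  also have "\<dots> = K * (\<bar>y - x\<bar> powr (- s) * \<bar>y - x\<bar> powr (- s))"
    using assms(3,4) by (simp add: powr_add[symmetric] powr_mult_base mult.assoc)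
  also have "\<dots> \<le> K * (r powr (- s) * \<bar>y - x\<bar> powr (- s))"
    using powr_mono2'[of "- s" r "\<bar>y - x\<bar>"] assms(2-5) by (intro mult_left_mono mult_right_mono) auto
  finally show ?thesis by (simp add: mult.assoc)
qed

lemma abs_frac_tail_le:
  assumes u: "u \<in> borel_measurable borel" "\<And>x y. \<bar>u x - u y\<bar> \<le> M"
    and lip: "\<And>y. \<bar>y - x\<bar> \<le> \<eta> \<Longrightarrow> \<bar>u x - u y\<bar> \<le> K * \<bar>y - x\<bar>"
    and s: "0 < s" "s < 1" and "0 < r" "0 < \<eta>"
  shows "\<bar>frac_tail s u x r\<bar> \<le> K * r powr (- s) * (LINT t:{t. \<bar>t\<bar> \<le> \<eta>}|lborel. \<bar>t\<bar> powr (- s))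
           + M * (LINT t:{t. \<eta> \<le> \<bar>t\<bar>}|lborel. \<bar>t\<bar> powr (- (1 + 2 * s)))"
proof -
  have "M \<ge> 0" using u(2)[of x x] by simp
  have "K * \<eta> \<ge> 0" using lip[of "x + \<eta>"] \<open>0 < \<eta>\<close> by simp
  hence "K \<ge> 0" using \<open>0 < \<eta>\<close> by (simp add: zero_le_mult_iff)
  define near where "near = (\<lambda>y. indicator {y. \<bar>y - x\<bar> \<le> \<eta>} y * \<bar>y - x\<bar> powr (- s))"
  define far where "far = (\<lambda>y. indicator {y. \<eta> \<le> \<bar>y - x\<bar>} y * \<bar>y - x\<bar> powr (- (1 + 2 * s)))"
  define f where "f = (\<lambda>y. indicator {y. r \<le> \<bar>y - x\<bar>} y * frac_kernel s u x y)"
  define g where "g = (\<lambda>y. K * r powr (- s) * near y + M * far y)"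
  have near: "integrable lborel near"
    using set_integrable_abs_powr_near[of "- s" \<eta> x] s \<open>0 < \<eta>\<close> by (simp add: near_def set_integrable_def)
  have far: "integrable lborel far"
    using set_integrable_abs_powr_far[of "- (1 + 2 * s)" \<eta> x] s \<open>0 < \<eta>\<close> by (simp add: far_def set_integrable_def)
  have f: "integrable lborel f"
    using frac_tail_integrable[OF u \<open>0 < s\<close> \<open>0 < r\<close>, of x] by (simp add: f_def set_integrable_def)
  have "\<bar>f y\<bar> \<le> g y" for y
  proof (cases "r \<le> \<bar>y - x\<bar>")
    case False
    then show ?thesis using \<open>K \<ge> 0\<close> \<open>M \<ge> 0\<close> by (simp add: f_def g_def near_def far_def)
  next
    case True
    show ?thesis
    proof (cases "\<bar>y - x\<bar> \<le> \<eta>")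
      case True
      have "\<bar>f y\<bar> \<le> K * r powr (- s) * \<bar>y - x\<bar> powr (- s)"
        using abs_frac_kernel_le_near[OF lip[OF True] \<open>K \<ge> 0\<close> \<open>0 < r\<close> \<open>r \<le> \<bar>y - x\<bar>\<close>]
          \<open>r \<le> \<bar>y - x\<bar>\<close> s by (simp add: f_def)
      also have "\<dots> = K * r powr (- s) * near y" using True by (simp add: near_def)
      finally show ?thesis using \<open>M \<ge> 0\<close> by (simp add: g_def far_def add_increasing2)
    next
      case False
      have "\<bar>f y\<bar> \<le> M * \<bar>y - x\<bar> powr (- (1 + 2 * s))"
        using \<open>r \<le> \<bar>y - x\<bar>\<close> u(2)[of x y] by (simp add: f_def abs_frac_kernel mult_right_mono)
      also have "\<dots> = M * far y" using False by (simp add: far_def)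
      finally show ?thesis using \<open>K \<ge> 0\<close> by (simp add: g_def near_def add_increasing)
    qed
  qed
  hence "\<bar>\<integral>y. f y \<partial>lborel\<bar> \<le> (\<integral>y. g y \<partial>lborel)"
    using near far f by (intro integral_abs_bound_integral) (auto simp: g_def)
  also have "(\<integral>y. g y \<partial>lborel) = K * r powr (- s) * (\<integral>y. near y \<partial>lborel) + M * (\<integral>y. far y \<partial>lborel)"
    using near far by (simp add: g_def)
  finally show ?thesis
    using lborel_integral_translate[of "\<lambda>t. indicator {t. \<bar>t\<bar> \<le> \<eta>} t * \<bar>t\<bar> powr (- s)" x]
      lborel_integral_translate[of "\<lambda>t. indicator {t. \<eta> \<le> \<bar>t\<bar>} t * \<bar>t\<bar> powr (- (1 + 2 * s))" x]
    by (simp add: frac_tail_def set_lebesgue_integral_def f_def near_def far_def indicator_def)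
qed

section \<open>The sawtooth function\<close>

lemma sub_mult_ceiling_bounds:
  fixes p a y :: real
  assumes "p > 0"
  shows "a - p < y - p * \<lceil>(y - a) / p\<rceil>" "y - p * \<lceil>(y - a) / p\<rceil> \<le> a"
proof -
  let ?c = "(y - a) / p"
  have "p * ?c \<le> p * \<lceil>?c\<rceil>" "p * \<lceil>?c\<rceil> < p * (?c + 1)"
    using assms by (intro mult_left_mono mult_strict_left_mono; linarith)+
  moreover have "p * ?c = y - a" using assms by simp
  ultimately show "a - p < y - p * \<lceil>?c\<rceil>" "y - p * \<lceil>?c\<rceil> \<le> a"
    by (simp_all add: algebra_simps)
qed

lemma ubar_measurable [measurable]: "ubar \<Lambda> \<delta> \<in> borel_measurable borel"
  unfolding ubar_def Let_def by measurable

locale sawtooth =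
  fixes \<Lambda> \<delta> :: real
  assumes \<Lambda>_pos: "\<Lambda> > 0" and \<delta>_pos: "\<delta> > 0"
begin

abbreviation u :: "real \<Rightarrow> real" where "u \<equiv> ubar \<Lambda> \<delta>"

lemma period_pos: "(\<Lambda> + 1) * \<delta> > 0"
  using \<Lambda>_pos \<delta>_pos by simp

lemma \<Lambda>\<delta>_pos: "\<Lambda> * \<delta> > 0"
  using \<Lambda>_pos \<delta>_pos by simp

lemma u_on_period:
  assumes "-\<delta> < y" "y \<le> \<Lambda> * \<delta>"
  shows "u y = (if y < 0 then - \<Lambda> * y else y)"
proof -
  have "\<lceil>(y - \<Lambda> * \<delta>) / ((\<Lambda> + 1) * \<delta>)\<rceil> = 0"
    using assms \<Lambda>_pos \<delta>_pos by (simp add: ceiling_eq_iff field_simps)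
  thus ?thesis by (simp add: ubar_def Let_def)
qed

lemma u_periodic: "u (y + k * ((\<Lambda> + 1) * \<delta>)) = u y" for k :: int
proof -
  have "(y + k * ((\<Lambda> + 1) * \<delta>) - \<Lambda> * \<delta>) / ((\<Lambda> + 1) * \<delta>) = (y - \<Lambda> * \<delta>) / ((\<Lambda> + 1) * \<delta>) + k"
    using period_pos by (simp add: field_simps)
  hence "\<lceil>(y + k * ((\<Lambda> + 1) * \<delta>) - \<Lambda> * \<delta>) / ((\<Lambda> + 1) * \<delta>)\<rceil> = \<lceil>(y - \<Lambda> * \<delta>) / ((\<Lambda> + 1) * \<delta>)\<rceil> + k"
    by simp
  thus ?thesis by (simp add: ubar_def Let_def algebra_simps)
qed

lemma u_reduce:
  obtains z and k :: int where "-\<delta> < z" "z \<le> \<Lambda> * \<delta>" "y = z + k * ((\<Lambda> + 1) * \<delta>)"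
proof -
  define p where "p = (\<Lambda> + 1) * \<delta>"
  define k where "k = \<lceil>(y - \<Lambda> * \<delta>) / p\<rceil>"
  have "\<Lambda> * \<delta> - p < y - p * k" "y - p * k \<le> \<Lambda> * \<delta>"
    using sub_mult_ceiling_bounds[OF period_pos, where a = "\<Lambda> * \<delta>" and y = y] unfolding k_def p_def .
  moreover have "\<Lambda> * \<delta> - p = - \<delta>" by (simp add: p_def algebra_simps)
  ultimately show thesis
    by (intro that[of "y - k * p" k]) (simp_all add: p_def mult.commute)
qed

lemma u_bounds: "0 \<le> u y" "u y \<le> \<Lambda> * \<delta>"
proof -
  obtain z and k :: int where z: "-\<delta> < z" "z \<le> \<Lambda> * \<delta>" and y: "y = z + k * ((\<Lambda> + 1) * \<delta>)"
    by (rule u_reduce)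
  have "0 \<le> - \<Lambda> * z" "- \<Lambda> * z \<le> \<Lambda> * \<delta>" if "z < 0"
    using that z \<Lambda>_pos mult_left_mono[of "- z" \<delta> \<Lambda>] by (auto simp: mult_nonneg_nonpos)
  thus "0 \<le> u y" "u y \<le> \<Lambda> * \<delta>"
    unfolding y u_periodic u_on_period[OF z] using z by auto
qed

lemma u_reflect: "u (- \<delta> - y) = \<Lambda> * \<delta> - u y"
proof -
  obtain z and k :: int where z: "-\<delta> < z" "z \<le> \<Lambda> * \<delta>" and y: "y = z + k * ((\<Lambda> + 1) * \<delta>)"
    by (rule u_reduce)
  have uy: "u y = u z" by (simp only: y u_periodic)
  show ?thesis
  proof (cases "z < 0")
    case True
    have "u (- \<delta> - y) = u ((- \<delta> - z) + (- k) * ((\<Lambda> + 1) * \<delta>))"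
      by (simp add: y algebra_simps)
    also have "\<dots> = - \<Lambda> * (- \<delta> - z)"
      using True z \<Lambda>\<delta>_pos by (subst u_periodic, subst u_on_period) auto
    finally show ?thesis using True z by (simp add: uy u_on_period algebra_simps)
  next
    case False
    have "u (- \<delta> - y) = u ((\<Lambda> * \<delta> - z) + (- k - 1) * ((\<Lambda> + 1) * \<delta>))"
      by (simp add: y algebra_simps)
    also have "\<dots> = \<Lambda> * \<delta> - z"
      using False z \<delta>_pos by (subst u_periodic, subst u_on_period) auto
    finally show ?thesis using False z by (simp add: uy u_on_period)
  qed
qed

lemma u_oscillation: "\<bar>u x - u y\<bar> \<le> \<Lambda> * \<delta>"
  using u_bounds[of x] u_bounds[of y] by linarith

lemma u_on_left: "-\<delta> < y \<Longrightarrow> y < 0 \<Longrightarrow> u y = - \<Lambda> * y"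
  using u_on_period \<Lambda>\<delta>_pos by simp

lemma u_lipschitz:
  assumes "-\<delta> < x" "x \<le> 0" "-\<delta> < y" "y \<le> \<Lambda> * \<delta>"
  shows "\<bar>u x - u y\<bar> \<le> (\<Lambda> + 1) * \<bar>y - x\<bar>"
proof -
  have ux: "u x = - \<Lambda> * x" using assms \<Lambda>\<delta>_pos u_on_period[of x] by auto
  show ?thesis
  proof (cases "y < 0")
    case True
    hence "\<bar>u x - u y\<bar> = \<Lambda> * \<bar>y - x\<bar>"
      using ux u_on_left[OF assms(3)] \<Lambda>_pos by (simp add: abs_mult flip: right_diff_distrib)
    thus ?thesis by (simp add: distrib_right)
  next
    case False
    have "u y = y" using False u_on_period[OF assms(3,4)] by simp
    moreover have "(\<Lambda> + 1) * \<bar>y - x\<bar> = \<Lambda> * y - \<Lambda> * x + y - x"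
      using False assms(2) by (simp add: algebra_simps)
    moreover have "\<Lambda> * x \<le> 0" "0 \<le> \<Lambda> * y"
      using False assms(2) \<Lambda>_pos by (auto simp: mult_nonneg_nonpos)
    ultimately show ?thesis unfolding ux abs_le_iff using assms(2) False by linarith
  qed
qed

lemma u_affine_near:
  assumes "-\<delta> < x" "x < 0" "\<bar>y - x\<bar> < min (x + \<delta>) (- x)"
  shows "u y = - \<Lambda> * y"
  using assms by (intro u_on_left) auto

lemma tendsto_frac_lap_trunc_u:
  assumes "s > 0" "-\<delta> < x" "x < 0"
  shows "(frac_lap_trunc s u x \<longlongrightarrow> 2 * frac_tail s u x (min (x + \<delta>) (- x))) (at_right 0)"
  using assms u_affine_near
  by (intro tendsto_frac_lap_trunc_if_affine_near[OF ubar_measurable u_oscillation, where a = "- \<Lambda>" and b = 0]) auto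

lemma frac_lap_u:
  assumes "s > 0" "-\<delta> < x" "x < 0"
  shows "frac_lap s u x = 2 * frac_tail s u x (min (x + \<delta>) (- x))"
  using assms u_affine_near
  by (intro frac_lap_eq_if_affine_near[OF ubar_measurable u_oscillation, where a = "- \<Lambda>" and b = 0]) auto

lemma frac_lap_u_reflect:
  assumes "s > 0" "-\<delta> < x" "x < 0"
  shows "frac_lap s u (- \<delta> - x) = - frac_lap s u x"
proof -
  have "frac_lap s u (- \<delta> - x) = 2 * frac_tail s u (- \<delta> - x) (min ((- \<delta> - x) + \<delta>) (- (- \<delta> - x)))"
    using assms by (intro frac_lap_u) auto
  also have "min ((- \<delta> - x) + \<delta>) (- (- \<delta> - x)) = min (x + \<delta>) (- x)" by (simp add: min.commute)
  finally show ?thesis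
    using frac_lap_u[OF assms] frac_tail_reflect[where u = u and c = "- \<delta>", OF u_reflect] by simp
qed

lemma abs_frac_tail_u_le:
  assumes s: "0 < s" "s < 1"
  obtains C1 C2 where "\<And>x. - \<delta> / 2 < x \<Longrightarrow> x < 0 \<Longrightarrow> \<bar>frac_tail s u x \<bar>x\<bar>\<bar> \<le> C1 * \<bar>x\<bar> powr (- s) + C2"
proof
  define \<eta> where "\<eta> = min (\<delta> / 2) (\<Lambda> * \<delta>)"
  have "0 < \<eta>" "\<eta> \<le> \<delta> / 2" "\<eta> \<le> \<Lambda> * \<delta>" using \<Lambda>\<delta>_pos \<delta>_pos by (simp_all add: \<eta>_def)
  fix x assume x: "- \<delta> / 2 < x" "x < 0"
  have "\<bar>u x - u y\<bar> \<le> (\<Lambda> + 1) * \<bar>y - x\<bar>" if "\<bar>y - x\<bar> \<le> \<eta>" for y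
  proof (rule u_lipschitz)
    show "-\<delta> < x" "x \<le> 0" "-\<delta> < y" "y \<le> \<Lambda> * \<delta>"
      using x \<open>\<eta> \<le> \<delta> / 2\<close> \<open>\<eta> \<le> \<Lambda> * \<delta>\<close> abs_le_D1[OF that] abs_le_D2[OF that] by auto
  qed
  thus "\<bar>frac_tail s u x \<bar>x\<bar>\<bar> \<le> (\<Lambda> + 1) * (LINT t:{t. \<bar>t\<bar> \<le> \<eta>}|lborel. \<bar>t\<bar> powr (- s)) * \<bar>x\<bar> powr (- s)
      + \<Lambda> * \<delta> * (LINT t:{t. \<eta> \<le> \<bar>t\<bar>}|lborel. \<bar>t\<bar> powr (- (1 + 2 * s)))"
    using abs_frac_tail_le[OF ubar_measurable u_oscillation _ s, where r = "\<bar>x\<bar>"] x \<open>0 < \<eta>\<close>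
    by (simp add: mult_ac)
qed

lemma frac_lap_u_integrable:
  assumes s: "0 < s" "s < 1"
  shows "frac_lap s u integrable_on {- \<delta> / 2..0}"
proof -
  obtain C1 C2 where C: "\<And>x. - \<delta> / 2 < x \<Longrightarrow> x < 0 \<Longrightarrow> \<bar>frac_tail s u x \<bar>x\<bar>\<bar> \<le> C1 * \<bar>x\<bar> powr (- s) + C2"
    using abs_frac_tail_u_le[OF s] by blast
  define I where "I = {- \<delta> / 2<..<0::real}"
  have "set_integrable lborel {y. \<bar>y\<bar> \<le> \<delta> / 2} (\<lambda>x. \<bar>x\<bar> powr (- s))"
    using set_integrable_abs_powr_near[of "- s" "\<delta> / 2" 0] s \<delta>_pos by simp
  hence "set_integrable lborel I (\<lambda>x. \<bar>x\<bar> powr (- s))"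
    by (rule set_integrable_subset) (auto simp: I_def)
  moreover have "set_integrable lborel I (\<lambda>x. C2)"
    using borel_integrable_atLeastAtMost'[of "- \<delta> / 2" 0 "\<lambda>x. C2"]
    by (rule set_integrable_subset) (auto simp: I_def)
  ultimately have bound: "set_integrable lborel I (\<lambda>x. C1 * \<bar>x\<bar> powr (- s) + C2)"
    by (intro set_integral_add(1) set_integrable_mult_right)
  have "set_integrable lborel I (\<lambda>x. frac_tail s u x \<bar>x\<bar>)"
  proof (rule set_integrable_bound[OF bound])
    show "set_borel_measurable lborel I (\<lambda>x. frac_tail s u x \<bar>x\<bar>)"
      unfolding set_borel_measurable_def I_def by measurable
    show "AE x in lborel. x \<in> I \<longrightarrow> norm (frac_tail s u x \<bar>x\<bar>) \<le> norm (C1 * \<bar>x\<bar> powr (- s) + C2)"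
      using C by (intro AE_I2 impI) (simp add: I_def order_trans[OF _ abs_ge_self])
  qed
  hence "set_integrable lborel I (\<lambda>x. 2 * frac_tail s u x \<bar>x\<bar>)" by simp
  moreover have "2 * frac_tail s u x \<bar>x\<bar> = frac_lap s u x" if "x \<in> I" for x
    using frac_lap_u[OF s(1), of x] that \<delta>_pos by (simp add: I_def)
  ultimately have "set_integrable lborel I (frac_lap s u)"
    using set_integrable_cong[OF refl refl, where f = "\<lambda>x. 2 * frac_tail s u x \<bar>x\<bar>" and f' = "frac_lap s u"]
    by (simp only:)
  hence "frac_lap s u integrable_on {- \<delta> / 2<..<0}"
    unfolding I_def by (rule set_borel_integral_eq_integral(1))
  thus ?thesis by (simp only: integrable_on_def has_integral_Icc_iff_Ioo)
qed

end

theorem lemma1p2: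
  fixes \<Lambda> \<delta> s :: real
  assumes "\<Lambda> > 0" and "\<delta> > 0" and "0 < s" and "s < 1"
  shows "(\<forall>x \<in> {-\<delta><..<0}. (\<exists>L. (frac_lap_trunc s (ubar \<Lambda> \<delta>) x \<longlongrightarrow> L) (at_right 0)))
         \<and> ((\<lambda>x. frac_lap s (ubar \<Lambda> \<delta>) x) has_integral 0) {-\<delta>..0}"
proof
  interpret sawtooth \<Lambda> \<delta> using assms by unfold_locales
  show "\<forall>x \<in> {-\<delta><..<0}. \<exists>L. (frac_lap_trunc s (ubar \<Lambda> \<delta>) x \<longlongrightarrow> L) (at_right 0)"
    using tendsto_frac_lap_trunc_u[OF assms(3)] greaterThanLessThan_iff by blast
  have "frac_lap s u integrable_on {(- \<delta> + 0) / 2..0}"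
    using frac_lap_u_integrable assms(3,4) by simp
  moreover have "frac_lap s u (- \<delta> + 0 - x) = - frac_lap s u x" if "- \<delta> < x" "x < 0" for x
    using frac_lap_u_reflect assms(3) that by simp
  ultimately show "((\<lambda>x. frac_lap s (ubar \<Lambda> \<delta>) x) has_integral 0) {-\<delta>..0}"
    using has_integral_0_if_odd_about_midpoint assms(2) by simp
qed

end
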